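(* Let $N\in\mathbb{N}$ and $m,m'\in\mathrm{Ran}[m_N]$. Then \[ w_1(\mu_{\mathrm{MC}}^{m;N},\mu_{\mathrm{MC}}^{m';N};N)=|m'-m|. \]
   Context: $\Lambda$ is a finite lattice with $N=|\Lambda|$ sites (identified with $[N]$), $\mathcal{S}=\{-1,1\}^\Lambda\subset\mathbb{R}^N$, $M[\phi]=\sum_{x}\phi(x)$, $m_N=M/N$, $\mathrm{Ran}[m_N]$ its range. For $m\in\mathrm{Ran}[m_N]$, $\mu_{\mathrm{MC}}^{m;N}$ is the uniform probability measure on $\mathcal{S}_m=\{\phi\in\mathcal{S}:m_N[\phi]=m\}$. The specific $1$-norm fluctuation distance is $w_1(\mu_1,\mu_2;N)=\inf_\gamma\int\gamma(d\phi,d\phi')\frac1N\sum_{x}|\phi(x)-\phi'(x)|$, the infimum over all couplings of $\mu_1,\mu_2$. *)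

theory Defs
  imports "HOL-Probability.Probability" "HOL-Library.FuncSet"
begin

text \<open>Lattice sites are identified with {..<N}; spin configurations are elements of
  {-1,1}^{..<N}, represented as extensional functions (PiE).\<close>

definition spins :: "nat \<Rightarrow> (nat \<Rightarrow> real) set" where
  "spins N = PiE {..<N} (\<lambda>_. {-1, 1})"

definition magnetization :: "nat \<Rightarrow> (nat \<Rightarrow> real) \<Rightarrow> real" where
  "magnetization N \<phi> = (\<Sum>x<N. \<phi> x)"

definition mN :: "nat \<Rightarrow> (nat \<Rightarrow> real) \<Rightarrow> real" where
  "mN N \<phi> = magnetization N \<phi> / real N"

definition RanmN :: "nat \<Rightarrow> real set" where
  "RanmN N = mN N ` spins N"

definition spins_m :: "nat \<Rightarrow> real \<Rightarrow> (nat \<Rightarrow> real) set" where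
  "spins_m N m = {\<phi> \<in> spins N. mN N \<phi> = m}"

definition mu_MC :: "nat \<Rightarrow> real \<Rightarrow> (nat \<Rightarrow> real) pmf" where
  "mu_MC N m = pmf_of_set (spins_m N m)"

definition is_coupling :: "('a \<times> 'a) pmf \<Rightarrow> 'a pmf \<Rightarrow> 'a pmf \<Rightarrow> bool" where
  "is_coupling \<gamma> \<mu>1 \<mu>2 \<longleftrightarrow> map_pmf fst \<gamma> = \<mu>1 \<and> map_pmf snd \<gamma> = \<mu>2"

definition w1 :: "(nat \<Rightarrow> real) pmf \<Rightarrow> (nat \<Rightarrow> real) pmf \<Rightarrow> nat \<Rightarrow> real" where
  "w1 \<mu>1 \<mu>2 N = Inf {measure_pmf.expectation \<gamma>
        (\<lambda>(\<phi>, \<phi>'). (1 / real N) * (\<Sum>x<N. \<bar>\<phi> x - \<phi>' x\<bar>)) | \<gamma>. is_coupling \<gamma> \<mu>1 \<mu>2}"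

end

theory Submission
  imports Defs
begin

text \<open>Any coupling is supported on pairs with magnetizations m and m', and the specific
  l1 distance of such a pair is at least |m' - m|. Conversely, a configuration is determined by
  its set of up spins, whose size k is fixed by the magnetization. Choosing a pair A \<subseteq> B
  uniformly among sets of sizes k \<le> k' gives a coupling with uniform marginals, since every
  A has the same number of supersets B and every B the same number of subsets A; on such
  ordered pairs the l1 distance is exactly the difference of the magnetizations.\<close>

lemma set_pmf_coupling:
  assumes "is_coupling \<gamma> \<mu> \<nu>" "p \<in> set_pmf \<gamma>"
  shows "fst p \<in> set_pmf \<mu>" "snd p \<in> set_pmf \<nu>"
  using assms unfolding is_coupling_def by auto

lemma is_coupling_swap:
  "is_coupling \<gamma> \<mu> \<nu> \<Longrightarrow> is_coupling (map_pmf prod.swap \<gamma>) \<nu> \<mu>"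
  unfolding is_coupling_def by (simp add: map_pmf_comp)

lemma is_coupling_map_prod:
  "is_coupling \<gamma> \<mu> \<nu> \<Longrightarrow> is_coupling (map_pmf (map_prod f g) \<gamma>) (map_pmf f \<mu>) (map_pmf g \<nu>)"
  unfolding is_coupling_def by (auto simp: map_pmf_comp)

lemma map_pmf_of_set_constant_fibres:
  assumes "finite Q" "T \<noteq> {}" "f ` Q \<subseteq> T" "c > 0"
    and fibres: "\<And>a. a \<in> T \<Longrightarrow> card {q \<in> Q. f q = a} = c"
  shows "map_pmf f (pmf_of_set Q) = pmf_of_set T"
proof -
  define F where "F a = {q \<in> Q. f q = a}" for a
  have F_nonempty: "F a \<noteq> {}" if "a \<in> T" for a
    using fibres[OF that] \<open>c > 0\<close> by (auto simp: F_def card_gt_0_iff)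
  have "T \<subseteq> f ` Q" using F_nonempty by (force simp: F_def)
  then have "finite T" using \<open>finite Q\<close> finite_surj by blast
  have Q_eq: "Q = (\<Union>a\<in>T. F a)"
    using \<open>f ` Q \<subseteq> T\<close> by (auto simp: F_def)
  have "finite (\<Union>a\<in>T. F a)" using \<open>finite Q\<close> by (simp flip: Q_eq)
  then have "pmf_of_set Q = pmf_of_set T \<bind> (\<lambda>a. pmf_of_set (F a))"
    unfolding Q_eq using F_nonempty fibres \<open>T \<noteq> {}\<close>
    by (intro pmf_of_set_UN) (auto simp: F_def disjoint_family_on_def)
  then have "map_pmf f (pmf_of_set Q) = pmf_of_set T \<bind> (\<lambda>a. map_pmf f (pmf_of_set (F a)))"
    by (simp add: map_bind_pmf)
  also have "\<dots> = pmf_of_set T \<bind> return_pmf"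
  proof (intro bind_pmf_cong)
    fix a assume "a \<in> set_pmf (pmf_of_set T)"
    then have "a \<in> T" using \<open>finite T\<close> \<open>T \<noteq> {}\<close> by simp
    have "finite (F a)" using \<open>finite Q\<close> by (simp add: F_def)
    then have "map_pmf f (pmf_of_set (F a)) = map_pmf (\<lambda>_. a) (pmf_of_set (F a))"
      using F_nonempty[OF \<open>a \<in> T\<close>] by (intro map_pmf_cong) (auto simp: F_def)
    then show "map_pmf f (pmf_of_set (F a)) = return_pmf a" by simp
  qed simp
  finally show ?thesis by (simp add: bind_return_pmf')
qed

definition card_subsets :: "'a set \<Rightarrow> nat \<Rightarrow> 'a set set" where
  "card_subsets U k = {A. A \<subseteq> U \<and> card A = k}"

lemma finite_card_subsets: "finite U \<Longrightarrow> finite (card_subsets U k)"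
  unfolding card_subsets_def by (rule finite_subset[of _ "Pow U"]) auto

lemma card_card_subsets: "finite U \<Longrightarrow> card (card_subsets U k) = card U choose k"
  unfolding card_subsets_def by (rule n_subsets)

lemma card_subsets_nonempty: "k \<le> card U \<Longrightarrow> card_subsets U k \<noteq> {}"
  unfolding card_subsets_def by (metis (mono_tags) empty_iff mem_Collect_eq obtain_subset_with_card_n)

lemma card_supersets:
  assumes "finite U" "A \<subseteq> U" "card A \<le> k"
  shows "card {B \<in> card_subsets U k. A \<subseteq> B} = (card U - card A) choose (k - card A)"
proof -
  have "finite A" using assms finite_subset by blast
  have "bij_betw (\<lambda>C. A \<union> C) (card_subsets (U - A) (k - card A)) {B \<in> card_subsets U k. A \<subseteq> B}"
  proof (rule bij_betw_byWitness[where f' = "\<lambda>B. B - A"])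
    show "(\<lambda>C. A \<union> C) ` card_subsets (U - A) (k - card A) \<subseteq> {B \<in> card_subsets U k. A \<subseteq> B}"
    proof clarify
      fix C assume "C \<in> card_subsets (U - A) (k - card A)"
      then have C: "C \<subseteq> U - A" "card C = k - card A" by (auto simp: card_subsets_def)
      moreover have "finite C" using C(1) \<open>finite U\<close> finite_subset by blast
      moreover have "card (A \<union> C) = card A + card C"
        using C(1) \<open>finite C\<close> \<open>finite A\<close> by (intro card_Un_disjoint) auto
      ultimately show "A \<union> C \<in> card_subsets U k \<and> A \<subseteq> A \<union> C"
        using assms by (auto simp: card_subsets_def)
    qed
    show "(\<lambda>B. B - A) ` {B \<in> card_subsets U k. A \<subseteq> B} \<subseteq> card_subsets (U - A) (k - card A)"
      using \<open>finite A\<close> by (auto simp: card_subsets_def card_Diff_subset)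
  qed (auto simp: card_subsets_def)
  then have "card {B \<in> card_subsets U k. A \<subseteq> B} = card (card_subsets (U - A) (k - card A))"
    by (simp add: bij_betw_same_card)
  also have "\<dots> = (card U - card A) choose (k - card A)"
    using assms \<open>finite A\<close> by (simp add: card_card_subsets card_Diff_subset)
  finally show ?thesis .
qed

lemma nested_subsets_coupling:
  assumes "finite U" "k \<le> k'" "k' \<le> card U"
  obtains \<gamma> where "is_coupling \<gamma> (pmf_of_set (card_subsets U k)) (pmf_of_set (card_subsets U k'))"
    and "\<And>A B. (A, B) \<in> set_pmf \<gamma> \<Longrightarrow> A \<subseteq> B"
proof -
  define Q where "Q = (SIGMA A:card_subsets U k. {B \<in> card_subsets U k'. A \<subseteq> B})"
  have "finite Q" using \<open>finite U\<close> by (simp add: Q_def finite_card_subsets)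
  have fst_fibre: "card {q \<in> Q. fst q = A} = (card U - k) choose (k' - k)"
    if "A \<in> card_subsets U k" for A
  proof -
    have "{q \<in> Q. fst q = A} = {A} \<times> {B \<in> card_subsets U k'. A \<subseteq> B}"
      using that by (auto simp: Q_def)
    then show ?thesis
      using that assms card_supersets[of U A k'] by (simp add: card_cartesian_product card_subsets_def)
  qed
  have snd_fibre: "card {q \<in> Q. snd q = B} = k' choose k" if "B \<in> card_subsets U k'" for B
  proof -
    have "{A \<in> card_subsets U k. A \<subseteq> B} = card_subsets B k"
      using that by (auto simp: card_subsets_def)
    then have "{q \<in> Q. snd q = B} = card_subsets B k \<times> {B}"
      using that by (auto simp: Q_def)
    moreover have "finite B" "card B = k'"
      using that \<open>finite U\<close> finite_subset by (auto simp: card_subsets_def)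
    ultimately show ?thesis by (simp add: card_cartesian_product card_card_subsets)
  qed
  have "(card U - k) choose (k' - k) > 0" "k' choose k > 0" using assms by simp_all
  have "card_subsets U k \<noteq> {}" "card_subsets U k' \<noteq> {}"
    using assms by (simp_all add: card_subsets_nonempty)
  then obtain A where "A \<in> card_subsets U k" by blast
  then have "Q \<noteq> {}" using fst_fibre \<open>(card U - k) choose (k' - k) > 0\<close> by force
  have "map_pmf fst (pmf_of_set Q) = pmf_of_set (card_subsets U k)"
    using \<open>finite Q\<close> fst_fibre \<open>(card U - k) choose (k' - k) > 0\<close> \<open>card_subsets U k \<noteq> {}\<close>
    by (intro map_pmf_of_set_constant_fibres) (auto simp: Q_def)
  moreover have "map_pmf snd (pmf_of_set Q) = pmf_of_set (card_subsets U k')"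
    using \<open>finite Q\<close> snd_fibre \<open>k' choose k > 0\<close> \<open>card_subsets U k' \<noteq> {}\<close>
    by (intro map_pmf_of_set_constant_fibres) (auto simp: Q_def)
  moreover have "A \<subseteq> B" if "(A, B) \<in> set_pmf (pmf_of_set Q)" for A B
    using that \<open>finite Q\<close> \<open>Q \<noteq> {}\<close> by (simp add: Q_def)
  ultimately show ?thesis using that unfolding is_coupling_def by blast
qed

text \<open>The value undefined off the lattice makes spin_of_set N A extensional, as required
  for membership in spins N.\<close>
definition spin_of_set :: "nat \<Rightarrow> nat set \<Rightarrow> nat \<Rightarrow> real" where
  "spin_of_set N A x = (if x \<in> A then 1 else if x < N then -1 else undefined)"

lemma bij_betw_spin_of_set: "bij_betw (spin_of_set N) (Pow {..<N}) (spins N)"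
proof (rule bij_betw_byWitness[where f' = "\<lambda>\<phi>. {x. x < N \<and> \<phi> x = 1}"])
  show "\<forall>A\<in>Pow {..<N}. {x. x < N \<and> spin_of_set N A x = 1} = A"
    by (auto simp: spin_of_set_def)
  show "\<forall>\<phi>\<in>spins N. spin_of_set N {x. x < N \<and> \<phi> x = 1} = \<phi>"
  proof (intro ballI ext)
    fix \<phi> x assume "\<phi> \<in> spins N"
    show "spin_of_set N {x. x < N \<and> \<phi> x = 1} x = \<phi> x"
    proof (cases "x < N")
      case True
      then have "\<phi> x \<in> {-1, 1}" using \<open>\<phi> \<in> spins N\<close> unfolding spins_def by (auto intro: PiE_mem)
      then show ?thesis using True by (auto simp: spin_of_set_def)
    next
      case False
      then show ?thesis using \<open>\<phi> \<in> spins N\<close> by (auto simp: spins_def spin_of_set_def PiE_def extensional_def)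
    qed
  qed
  show "spin_of_set N ` Pow {..<N} \<subseteq> spins N"
    unfolding spins_def by (auto intro!: PiE_I simp: spin_of_set_def split: if_splits)
qed auto

lemma spin_of_set_mono: "A \<subseteq> B \<Longrightarrow> x < N \<Longrightarrow> spin_of_set N A x \<le> spin_of_set N B x"
  by (auto simp: spin_of_set_def)

lemma mN_spin_of_set:
  assumes "A \<subseteq> {..<N}"
  shows "mN N (spin_of_set N A) = (2 * real (card A) - real N) / real N"
proof -
  have "magnetization N (spin_of_set N A) = (\<Sum>x<N. if x \<in> A then 1 else - 1 :: real)"
    unfolding magnetization_def spin_of_set_def by (rule sum.cong) auto
  also have "\<dots> = real (card A) - real (card ({..<N} - A))"
    using assms by (simp add: sum.If_cases Int_absorb2 Diff_eq Int_commute)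
  also have "\<dots> = 2 * real (card A) - real N"
    using assms card_mono[OF _ assms] by (simp add: card_Diff_subset finite_subset)
  finally show ?thesis by (simp add: mN_def)
qed

lemma spins_m_eq_image:
  assumes "m \<in> RanmN N"
  obtains k where "k \<le> N" "spins_m N m = spin_of_set N ` card_subsets {..<N} k"
proof -
  note bij = bij_betw_spin_of_set[of N]
  have "RanmN N = (\<lambda>A. mN N (spin_of_set N A)) ` Pow {..<N}"
    unfolding RanmN_def bij_betw_imp_surj_on[OF bij, symmetric] by (simp add: image_image)
  then obtain A0 where A0: "A0 \<subseteq> {..<N}" "m = mN N (spin_of_set N A0)"
    using assms by auto
  have same_card: "mN N (spin_of_set N A) = m \<longleftrightarrow> card A = card A0" if "A \<subseteq> {..<N}" for A
  proof (cases "N = 0")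
    case True
    then show ?thesis using that A0 by simp
  next
    case False
    then show ?thesis using that A0 by (simp add: mN_spin_of_set divide_cancel_right)
  qed
  have "spins_m N m = spin_of_set N ` {A \<in> Pow {..<N}. mN N (spin_of_set N A) = m}"
    using bij unfolding spins_m_def bij_betw_def by auto
  also have "{A \<in> Pow {..<N}. mN N (spin_of_set N A) = m} = card_subsets {..<N} (card A0)"
    using same_card by (auto simp: card_subsets_def)
  finally show ?thesis
    using that A0(1) card_mono[OF _ A0(1)] by simp
qed

lemma set_pmf_mu_MC:
  assumes "m \<in> RanmN N"
  shows "set_pmf (mu_MC N m) = spins_m N m" "finite (spins_m N m)"
proof -
  show "finite (spins_m N m)"
    by (rule finite_subset[of _ "spins N"]) (auto simp: spins_m_def spins_def finite_PiE)
  moreover have "spins_m N m \<noteq> {}" using assms by (auto simp: RanmN_def spins_m_def)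
  ultimately show "set_pmf (mu_MC N m) = spins_m N m" by (simp add: mu_MC_def)
qed

lemma mu_MC_eq_map_pmf:
  assumes "m \<in> RanmN N"
  obtains k where "k \<le> N"
    "mu_MC N m = map_pmf (spin_of_set N) (pmf_of_set (card_subsets {..<N} k))"
proof -
  obtain k where k: "k \<le> N" "spins_m N m = spin_of_set N ` card_subsets {..<N} k"
    using spins_m_eq_image[OF assms] .
  have "inj_on (spin_of_set N) (card_subsets {..<N} k)"
    using bij_betw_imp_inj_on[OF bij_betw_spin_of_set] by (rule inj_on_subset) (auto simp: card_subsets_def)
  then have "map_pmf (spin_of_set N) (pmf_of_set (card_subsets {..<N} k)) = mu_MC N m"
    unfolding mu_MC_def k(2) using k(1)
    by (intro map_pmf_of_set_inj) (simp_all add: card_subsets_nonempty finite_card_subsets)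
  then show ?thesis using that k(1) by simp
qed

lemma ordered_spin_coupling:
  assumes "k \<le> k'" "k' \<le> N"
  obtains \<gamma> where
    "is_coupling \<gamma> (map_pmf (spin_of_set N) (pmf_of_set (card_subsets {..<N} k)))
                   (map_pmf (spin_of_set N) (pmf_of_set (card_subsets {..<N} k')))"
    and "\<And>\<phi> \<psi> x. (\<phi>, \<psi>) \<in> set_pmf \<gamma> \<Longrightarrow> x < N \<Longrightarrow> \<phi> x \<le> \<psi> x"
proof -
  obtain \<gamma> where \<gamma>: "is_coupling \<gamma> (pmf_of_set (card_subsets {..<N} k)) (pmf_of_set (card_subsets {..<N} k'))"
    and nested: "\<And>A B. (A, B) \<in> set_pmf \<gamma> \<Longrightarrow> A \<subseteq> B"
    using nested_subsets_coupling[of "{..<N}" k k'] assms by auto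
  show ?thesis
  proof (rule that[OF is_coupling_map_prod[OF \<gamma>]])
    fix \<phi> \<psi> x assume "(\<phi>, \<psi>) \<in> set_pmf (map_pmf (map_prod (spin_of_set N) (spin_of_set N)) \<gamma>)" "x < N"
    then show "\<phi> x \<le> \<psi> x" using nested spin_of_set_mono by auto
  qed
qed

lemma comparable_coupling_mu_MC:
  assumes "m \<in> RanmN N" "m' \<in> RanmN N"
  obtains \<gamma> where "is_coupling \<gamma> (mu_MC N m) (mu_MC N m')"
    and "\<And>\<phi> \<psi>. (\<phi>, \<psi>) \<in> set_pmf \<gamma> \<Longrightarrow> (\<forall>x<N. \<phi> x \<le> \<psi> x) \<or> (\<forall>x<N. \<psi> x \<le> \<phi> x)"
proof -
  obtain k where k: "k \<le> N" "mu_MC N m = map_pmf (spin_of_set N) (pmf_of_set (card_subsets {..<N} k))"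
    using mu_MC_eq_map_pmf[OF assms(1)] .
  obtain k' where k': "k' \<le> N" "mu_MC N m' = map_pmf (spin_of_set N) (pmf_of_set (card_subsets {..<N} k'))"
    using mu_MC_eq_map_pmf[OF assms(2)] .
  show ?thesis
  proof (cases "k \<le> k'")
    case True
    obtain \<gamma> where \<gamma>: "is_coupling \<gamma> (mu_MC N m) (mu_MC N m')"
      and ordered: "\<And>\<phi> \<psi> x. (\<phi>, \<psi>) \<in> set_pmf \<gamma> \<Longrightarrow> x < N \<Longrightarrow> \<phi> x \<le> \<psi> x"
      using ordered_spin_coupling[OF True k'(1)] unfolding k(2) k'(2) by blast
    show ?thesis by (rule that[OF \<gamma>]) (auto intro: ordered)
  next
    case False
    obtain \<gamma> where \<gamma>: "is_coupling \<gamma> (mu_MC N m') (mu_MC N m)"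
      and ordered: "\<And>\<phi> \<psi> x. (\<phi>, \<psi>) \<in> set_pmf \<gamma> \<Longrightarrow> x < N \<Longrightarrow> \<phi> x \<le> \<psi> x"
      using ordered_spin_coupling[of k' k N] False k(1) unfolding k(2) k'(2) by auto
    show ?thesis by (rule that[OF is_coupling_swap[OF \<gamma>]]) (auto intro: ordered)
  qed
qed

definition specific_l1_distance :: "nat \<Rightarrow> (nat \<Rightarrow> real) \<times> (nat \<Rightarrow> real) \<Rightarrow> real" where
  "specific_l1_distance N = (\<lambda>(\<phi>, \<phi>'). (1 / real N) * (\<Sum>x<N. \<bar>\<phi> x - \<phi>' x\<bar>))"

lemma w1_eq_Inf_specific_l1_distance:
  "w1 \<mu> \<nu> N = Inf {measure_pmf.expectation \<gamma> (specific_l1_distance N) | \<gamma>. is_coupling \<gamma> \<mu> \<nu>}"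
  unfolding w1_def specific_l1_distance_def ..

lemma abs_mN_diff_le_specific_l1_distance:
  "\<bar>mN N \<phi>' - mN N \<phi>\<bar> \<le> specific_l1_distance N (\<phi>, \<phi>')"
proof -
  have "\<bar>mN N \<phi>' - mN N \<phi>\<bar> = \<bar>\<Sum>x<N. \<phi>' x - \<phi> x\<bar> / real N"
    by (simp add: mN_def magnetization_def sum_subtractf diff_divide_distrib[symmetric])
  also have "\<dots> \<le> (\<Sum>x<N. \<bar>\<phi>' x - \<phi> x\<bar>) / real N"
    by (rule divide_right_mono) (auto intro: sum_abs)
  also have "\<dots> = specific_l1_distance N (\<phi>, \<phi>')"
    by (simp add: specific_l1_distance_def abs_minus_commute)
  finally show ?thesis .
qed

lemma specific_l1_distance_ordered:
  assumes "\<forall>x<N. \<phi> x \<le> \<phi>' x"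
  shows "specific_l1_distance N (\<phi>, \<phi>') = \<bar>mN N \<phi>' - mN N \<phi>\<bar>"
proof -
  have "specific_l1_distance N (\<phi>, \<phi>') = (\<Sum>x<N. \<phi>' x - \<phi> x) / real N"
    unfolding specific_l1_distance_def using assms by simp
  also have "\<dots> = mN N \<phi>' - mN N \<phi>"
    by (simp add: mN_def magnetization_def sum_subtractf diff_divide_distrib)
  finally show ?thesis
    using abs_mN_diff_le_specific_l1_distance[of N \<phi>' \<phi>] by linarith
qed

lemma specific_l1_distance_comparable:
  assumes "(\<forall>x<N. \<phi> x \<le> \<phi>' x) \<or> (\<forall>x<N. \<phi>' x \<le> \<phi> x)"
  shows "specific_l1_distance N (\<phi>, \<phi>') = \<bar>mN N \<phi>' - mN N \<phi>\<bar>"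
proof -
  have "specific_l1_distance N (\<phi>, \<phi>') = specific_l1_distance N (\<phi>', \<phi>)"
    by (simp add: specific_l1_distance_def abs_minus_commute)
  then show ?thesis
    using assms specific_l1_distance_ordered[of N \<phi> \<phi>'] specific_l1_distance_ordered[of N \<phi>' \<phi>]
    by (auto simp: abs_minus_commute)
qed

lemma expectation_ge_const_finite_support:
  fixes f :: "'a \<Rightarrow> real"
  assumes "finite (set_pmf p)" "\<And>x. x \<in> set_pmf p \<Longrightarrow> c \<le> f x"
  shows "c \<le> measure_pmf.expectation p f"
  by (rule measure_pmf.integral_ge_const)
    (use assms in \<open>auto simp: integrable_measure_pmf_finite AE_measure_pmf_iff\<close>)

lemma expectation_eq_const_on_support:
  fixes f :: "'a \<Rightarrow> real"
  assumes "\<And>x. x \<in> set_pmf p \<Longrightarrow> f x = c"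
  shows "measure_pmf.expectation p f = c"
proof -
  have "measure_pmf.expectation p f = measure_pmf.expectation p (\<lambda>_. c)"
    using assms by (intro integral_cong_AE) (auto simp: AE_measure_pmf_iff)
  then show ?thesis by simp
qed

lemma set_pmf_coupling_mu_MC:
  assumes "m \<in> RanmN N" "m' \<in> RanmN N" "is_coupling \<gamma> (mu_MC N m) (mu_MC N m')"
  shows "set_pmf \<gamma> \<subseteq> spins_m N m \<times> spins_m N m'" "finite (set_pmf \<gamma>)"
proof -
  show "set_pmf \<gamma> \<subseteq> spins_m N m \<times> spins_m N m'"
    using set_pmf_coupling[OF assms(3)] set_pmf_mu_MC assms(1,2) by fastforce
  then show "finite (set_pmf \<gamma>)"
    using set_pmf_mu_MC(2) assms(1,2) by (meson finite_SigmaI finite_subset)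
qed

lemma expectation_coupling_mu_MC_ge:
  assumes "m \<in> RanmN N" "m' \<in> RanmN N" "is_coupling \<gamma> (mu_MC N m) (mu_MC N m')"
  shows "\<bar>m' - m\<bar> \<le> measure_pmf.expectation \<gamma> (specific_l1_distance N)"
  using set_pmf_coupling_mu_MC[OF assms] abs_mN_diff_le_specific_l1_distance
  by (intro expectation_ge_const_finite_support) (auto simp: spins_m_def)

theorem theorem3p7:
  fixes N :: nat and m m' :: real
  assumes "m \<in> RanmN N" and "m' \<in> RanmN N"
  shows "w1 (mu_MC N m) (mu_MC N m') N = \<bar>m' - m\<bar>"
proof -
  let ?costs = "{measure_pmf.expectation \<gamma> (specific_l1_distance N) | \<gamma>.
                  is_coupling \<gamma> (mu_MC N m) (mu_MC N m')}"
  obtain \<gamma> where \<gamma>: "is_coupling \<gamma> (mu_MC N m) (mu_MC N m')"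
    and comparable: "\<And>\<phi> \<psi>. (\<phi>, \<psi>) \<in> set_pmf \<gamma> \<Longrightarrow> (\<forall>x<N. \<phi> x \<le> \<psi> x) \<or> (\<forall>x<N. \<psi> x \<le> \<phi> x)"
    using comparable_coupling_mu_MC[OF assms] by blast
  have "measure_pmf.expectation \<gamma> (specific_l1_distance N) = \<bar>m' - m\<bar>"
    using set_pmf_coupling_mu_MC(1)[OF assms \<gamma>] comparable specific_l1_distance_comparable
    by (intro expectation_eq_const_on_support) (force simp: spins_m_def)
  then have "\<bar>m' - m\<bar> \<in> ?costs" using \<gamma> by force
  moreover have "\<bar>m' - m\<bar> \<le> e" if "e \<in> ?costs" for e
    using that expectation_coupling_mu_MC_ge[OF assms] by blast
  ultimately show ?thesis
    unfolding w1_eq_Inf_specific_l1_distance by (rule cInf_eq_minimum)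
qed

end
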